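(* Assume regular conditional distributions $P_{Y|X}$ and $P_{X|Y}$ exist. Let $h>0$ be a density w.r.t. $P_X$ of some probability measure $Q^\ast_X$ on $(\Omega_X,\mathcal H)$, and let $g_0>0$ be a density w.r.t. $P_Y$ of a probability measure on $(\Omega_Y,\mathcal G)$. Define recursively for $n=0,1,\dots$ $$q^{(n)}_{Y|X=x}(y)=\frac{g_n(y)}{\int g_n(z)\,P_{Y|X=x}(dz)},\qquad g_{n+1}(y)=\int q^{(n)}_{Y|X=x}(y)\,h(x)\,P_{X|Y=y}(dx),$$ for $x\in\Omega_X$, $y\in\Omega_Y$. Then: (i) all $q^{(n)}_{Y|X=x}$ ($x\in\Omega_X$, $n\ge0$) are positive and probability densities with respect to $P_{Y|X=x}$, and all $g_n$ ($n\ge1$) are positive and probability densities with respect to $P_Y$. (ii) Let $Q^{(n)}$ be the probability measure on $(\Omega,\mathcal F)$ with $\frac{dQ^{(n)}}{dP}=g_n(Y)$ and $h_n=\frac{dQ^{(n)}_X}{dP_X}=E_P[g_n(Y)\mid X=\cdot]$. Assume that all integrals involved exist and are finite, in particular $E_P[h(X)\,|\log h(X)|]<\infty$ and $E_P[h(X)\,|\log h_n(X)|]<\infty$ for all $n$. Then $$\mathrm{KL}_{P_X}(h\,\|\,h_{n+1})\le\mathrm{KL}_{P_X}(h\,\|\,h_n)\quad\text{for all } n=0,1,\dots$$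
   Context: Setting: $(\Omega_X,\mathcal H)$ and $(\Omega_Y,\mathcal G)$ are measurable spaces, $\Omega=\Omega_X\times\Omega_Y$, $\mathcal F=\mathcal H\otimes\mathcal G$, and $X,Y$ are the coordinate projections. $P$ is a probability measure on $(\Omega,\mathcal F)$ with marginals $P_X,P_Y$. A regular conditional distribution of $Y$ given $X$ under $P$ is a map $(x,G)\mapsto P_{Y|X=x}[G]$ on $\Omega_X\times\mathcal G$ that is $\mathcal H$-measurable in $x$ for each $G$, a probability measure in $G$ for each $x$, and satisfies $P[Y\in G\mid X=x]=P_{Y|X=x}[G]$ for $P_X$-a.e. $x$, for every $G\in\mathcal G$; $P_{X|Y}$ is defined analogously. Kullback–Leibler divergence: for a probability space $(\overline\Omega,\mathcal M,\mu)$ and measurable $\lambda_0,\lambda_1\ge0$ with $\int\lambda_i\,d\mu=1$, $\mu[\lambda_i=0]=0$ ($i=0,1$) and $\int\lambda_0|\log(\lambda_0/\lambda_1)|\,d\mu<\infty$, $\mathrm{KL}_\mu(\lambda_0\|\lambda_1)=\int\lambda_0\log(\lambda_0/\lambda_1)\,d\mu$. *)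

theory Defs
  imports "HOL-Probability.Probability"
begin

definition marg_X :: "('a \<times> 'b) measure \<Rightarrow> 'a measure \<Rightarrow> 'a measure" where
  "marg_X P MX = distr P MX fst"

definition marg_Y :: "('a \<times> 'b) measure \<Rightarrow> 'b measure \<Rightarrow> 'b measure" where
  "marg_Y P MY = distr P MY snd"

definition reg_cond_dist_YX ::
  "('a \<times> 'b) measure \<Rightarrow> 'a measure \<Rightarrow> 'b measure \<Rightarrow> ('a \<Rightarrow> 'b measure) \<Rightarrow> bool" where
  "reg_cond_dist_YX P MX MY K \<longleftrightarrow>
     (\<forall>x\<in>space MX. prob_space (K x) \<and> sets (K x) = sets MY) \<and>
     (\<forall>G\<in>sets MY. (\<lambda>x. measure (K x) G) \<in> borel_measurable MX) \<and>
     (\<forall>G\<in>sets MY. \<forall>H\<in>sets MX.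
        measure P (H \<times> G) = (\<integral>x. indicator H x * measure (K x) G \<partial>marg_X P MX))"

definition reg_cond_dist_XY ::
  "('a \<times> 'b) measure \<Rightarrow> 'a measure \<Rightarrow> 'b measure \<Rightarrow> ('b \<Rightarrow> 'a measure) \<Rightarrow> bool" where
  "reg_cond_dist_XY P MX MY L \<longleftrightarrow>
     (\<forall>y\<in>space MY. prob_space (L y) \<and> sets (L y) = sets MX) \<and>
     (\<forall>H\<in>sets MX. (\<lambda>y. measure (L y) H) \<in> borel_measurable MY) \<and>
     (\<forall>H\<in>sets MX. \<forall>G\<in>sets MY.
        measure P (H \<times> G) = (\<integral>y. indicator G y * measure (L y) H \<partial>marg_Y P MY))"

primrec itg :: "('a \<Rightarrow> 'b measure) \<Rightarrow> ('b \<Rightarrow> 'a measure) \<Rightarrow> ('a \<Rightarrow> real) \<Rightarrow> ('b \<Rightarrow> real)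
                 \<Rightarrow> nat \<Rightarrow> 'b \<Rightarrow> real" where
  "itg K L h g0 0 = g0"
| "itg K L h g0 (Suc n) =
     (\<lambda>y. \<integral>x. (itg K L h g0 n y / (\<integral>z. itg K L h g0 n z \<partial>K x)) * h x \<partial>L y)"

definition itq :: "('a \<Rightarrow> 'b measure) \<Rightarrow> ('b \<Rightarrow> 'a measure) \<Rightarrow> ('a \<Rightarrow> real) \<Rightarrow> ('b \<Rightarrow> real)
                 \<Rightarrow> nat \<Rightarrow> 'a \<Rightarrow> 'b \<Rightarrow> real" where
  "itq K L h g0 n x y = itg K L h g0 n y / (\<integral>z. itg K L h g0 n z \<partial>K x)"

definition itQ :: "('a \<times> 'b) measure \<Rightarrow> ('b \<Rightarrow> real) \<Rightarrow> ('a \<times> 'b) measure" where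
  "itQ P g = density P (\<lambda>p. ennreal (g (snd p)))"

definition ith :: "('a \<times> 'b) measure \<Rightarrow> 'a measure \<Rightarrow> ('b \<Rightarrow> real) \<Rightarrow> 'a \<Rightarrow> real" where
  "ith P MX g = (\<lambda>x. enn2real (RN_deriv (marg_X P MX) (distr (itQ P g) MX fst) x))"

definition KL_dens :: "'c measure \<Rightarrow> ('c \<Rightarrow> real) \<Rightarrow> ('c \<Rightarrow> real) \<Rightarrow> real" where
  "KL_dens \<mu> l0 l1 = (\<integral>x. l0 x * ln (l0 x / l1 x) \<partial>\<mu>)"

end

theory Submission
  imports Defs
begin

text \<open>Write \<open>h\<^sub>n(x) = \<integral> g\<^sub>n dP\<^sub>Y\<^sub>|\<^sub>X\<^sub>=\<^sub>x\<close> and \<open>\<rho>\<^sub>n(y) = \<integral> h/h\<^sub>n dP\<^sub>X\<^sub>|\<^sub>Y\<^sub>=\<^sub>y\<close>, so that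
  \<open>q\<^sup>(\<^sup>n\<^sup>) = g\<^sub>n/h\<^sub>n\<close> and \<open>g\<^sub>n\<^sub>+\<^sub>1 = g\<^sub>n \<rho>\<^sub>n\<close>. Normalisation of \<open>q\<^sup>(\<^sup>n\<^sup>)\<close> is immediate; for
  \<open>g\<^sub>n\<^sub>+\<^sub>1\<close> disintegrate \<open>P\<close> once along \<open>Y\<close> and once along \<open>X\<close>: both \<open>\<integral> g\<^sub>n\<^sub>+\<^sub>1 dP\<^sub>Y\<close> and
  \<open>\<integral> h dP\<^sub>X\<close> equal \<open>\<integral> h(X) g\<^sub>n(Y) / h\<^sub>n(X) dP\<close>. The kernel version \<open>h\<^sub>n\<close> is a density of
  the \<open>X\<close>-marginal of \<open>Q\<^sup>(\<^sup>n\<^sup>)\<close>, so \<open>KL(h \<parallel> h\<^sub>n) = \<integral> h ln h - \<integral> h ln h\<^sub>n\<close> and it suffices to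
  show \<open>\<integral> h ln (h\<^sub>n\<^sub>+\<^sub>1/h\<^sub>n) dP\<^sub>X \<ge> 0\<close>. Integrating the elementary bound
  \<open>ln a \<ge> 2 - 1/r - r/a\<close> (twice \<open>ln t \<le> t - 1\<close>) with \<open>a = h\<^sub>n\<^sub>+\<^sub>1(x)/h\<^sub>n(x)\<close>, \<open>r = \<rho>\<^sub>n(y)\<close>
  against \<open>g\<^sub>n dP\<^sub>Y\<^sub>|\<^sub>X\<^sub>=\<^sub>x\<close> gives \<open>h ln (h\<^sub>n\<^sub>+\<^sub>1/h\<^sub>n) \<ge> h - (h/h\<^sub>n) \<integral> g\<^sub>n/\<rho>\<^sub>n dP\<^sub>Y\<^sub>|\<^sub>X\<^sub>=\<^sub>x\<close>,
  and the same double disintegration shows that the right-hand side has \<open>P\<^sub>X\<close>-integral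
  \<open>1 - \<integral> g\<^sub>n dP\<^sub>Y = 0\<close>. Unlike Jensen's inequality, this needs no integrability of \<open>ln \<rho>\<^sub>n\<close>.\<close>

lemma ln_ge_two_minus_inverse_minus_divide:
  fixes a r :: real
  assumes "0 < a" "0 < r"
  shows "2 - 1 / r - r / a \<le> ln a"
proof -
  have "ln (r / a) \<le> r / a - 1" "ln (1 / r) \<le> 1 / r - 1"
    using assms by (auto intro!: ln_le_minus_one)
  then show ?thesis
    using assms by (simp add: ln_div)
qed

lemma integral_pos_prob_space:
  fixes f :: "'a \<Rightarrow> real"
  assumes "prob_space M" "integrable M f" "\<And>x. x \<in> space M \<Longrightarrow> 0 < f x"
  shows "0 < integral\<^sup>L M f"
proof -
  interpret prob_space M by fact
  have nonneg: "AE x in M. 0 \<le> f x"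
    using assms(3) by (auto intro: less_imp_le)
  have "\<not> (AE x in M. f x = 0)"
  proof
    assume "AE x in M. f x = 0"
    with AE_space have "AE x in M. False"
      by eventually_elim (use assms(3) in force)
    then show False
      by simp
  qed
  then show ?thesis
    using integral_nonneg_AE[OF nonneg] integral_nonneg_eq_0_iff_AE[OF assms(2) nonneg] by linarith
qed

lemma integrable_mult_if_integrable_mult_abs:
  fixes w f :: "'a \<Rightarrow> real"
  assumes "integrable M (\<lambda>x. w x * \<bar>f x\<bar>)" "(\<lambda>x. w x * f x) \<in> borel_measurable M"
    and "\<And>x. x \<in> space M \<Longrightarrow> 0 \<le> w x"
  shows "integrable M (\<lambda>x. w x * f x)"
  using assms(1,2) by (rule Bochner_Integration.integrable_bound) (use assms(3) in \<open>auto intro!: AE_I2 simp: abs_mult\<close>)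

lemma measurable_prob_kernel:
  assumes "\<forall>x\<in>space A. prob_space (K x) \<and> sets (K x) = sets B"
    and "\<forall>G\<in>sets B. (\<lambda>x. measure (K x) G) \<in> borel_measurable A"
  shows "K \<in> measurable A (subprob_algebra B)"
proof (rule measurable_subprob_algebra)
  fix x assume "x \<in> space A"
  then show "subprob_space (K x)" "sets (K x) = sets B"
    using assms(1) by (auto simp: prob_space_imp_subprob_space)
next
  fix G assume "G \<in> sets B"
  then have "(\<lambda>x. ennreal (measure (K x) G)) \<in> borel_measurable A"
    using assms(2) by auto
  then show "(\<lambda>x. emeasure (K x) G) \<in> borel_measurable A"
    by (rule measurable_cong[THEN iffD1, rotated])
       (use assms(1) in \<open>auto simp: finite_measure.emeasure_eq_measure[OF prob_space.finite_measure]\<close>)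
qed

lemma measurable_distr_Pair_kernel:
  assumes "K \<in> measurable M (subprob_algebra N)"
  shows "(\<lambda>x. distr (K x) (M \<Otimes>\<^sub>M N) (Pair x)) \<in> measurable M (subprob_algebra (M \<Otimes>\<^sub>M N))"
  using measurable_distr2[OF _ assms, of "\<lambda>x y. (x, y)"] by simp

lemma measurable_prod_swap: "prod.swap \<in> measurable (M \<Otimes>\<^sub>M N) (N \<Otimes>\<^sub>M M)"
  unfolding prod.swap_def by measurable

lemma reg_cond_dist_YX_measurable:
  "reg_cond_dist_YX P MX MY K \<Longrightarrow> K \<in> measurable MX (subprob_algebra MY)"
  unfolding reg_cond_dist_YX_def by (blast intro: measurable_prob_kernel)

lemma sets_marg_X [simp, measurable_cong]: "sets (marg_X P MX) = sets MX"
  and space_marg_X [simp]: "space (marg_X P MX) = space MX"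
  and sets_marg_Y [simp, measurable_cong]: "sets (marg_Y P MY) = sets MY"
  and space_marg_Y [simp]: "space (marg_Y P MY) = space MY"
  by (simp_all add: marg_X_def marg_Y_def)

lemma measurable_marg_X [simp]: "measurable (marg_X P MX) N = measurable MX N"
  and measurable_marg_Y [simp]: "measurable (marg_Y P MY) N = measurable MY N"
  by (simp_all cong: measurable_cong_sets)

lemma prob_space_marg_X:
  assumes "prob_space P" "sets P = sets (MX \<Otimes>\<^sub>M MY)"
  shows "prob_space (marg_X P MX)"
  unfolding marg_X_def
  by (rule prob_space.prob_space_distr[OF assms(1)]) (simp add: measurable_cong_sets[OF assms(2) refl])

lemma emeasure_bind_distr_Pair_Times:
  assumes K: "K \<in> measurable M (subprob_algebra N)" and M: "space M \<noteq> {}" "sets M' = sets M"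
    and H: "H \<in> sets M" and G: "G \<in> sets N"
  shows "emeasure (M \<bind> (\<lambda>x. distr (K x) (M' \<Otimes>\<^sub>M N) (Pair x))) (H \<times> G)
    = (\<integral>\<^sup>+x. indicator H x * emeasure (K x) G \<partial>M)"
proof -
  have "(\<lambda>x. distr (K x) (M' \<Otimes>\<^sub>M N) (Pair x)) \<in> measurable M' (subprob_algebra (M' \<Otimes>\<^sub>M N))"
    using K by (intro measurable_distr_Pair_kernel) (simp add: measurable_cong_sets[OF M(2) refl])
  moreover have HG: "H \<times> G \<in> sets (M' \<Otimes>\<^sub>M N)"
    using H G unfolding M(2)[symmetric] by (rule pair_measureI)
  ultimately have "emeasure (M \<bind> (\<lambda>x. distr (K x) (M' \<Otimes>\<^sub>M N) (Pair x))) (H \<times> G)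
      = (\<integral>\<^sup>+x. emeasure (distr (K x) (M' \<Otimes>\<^sub>M N) (Pair x)) (H \<times> G) \<partial>M)"
    using M(1) by (intro emeasure_bind) (simp_all add: measurable_cong_sets[OF M(2) refl])
  also have "\<dots> = (\<integral>\<^sup>+x. indicator H x * emeasure (K x) G \<partial>M)"
  proof (rule nn_integral_cong)
    fix x assume x: "x \<in> space M"
    have "Pair x \<in> measurable (K x) (M' \<Otimes>\<^sub>M N)"
      using x sets_eq_imp_space_eq[OF M(2)] by (simp add: subprob_measurableD[OF K x] measurable_Pair1')
    then have "emeasure (distr (K x) (M' \<Otimes>\<^sub>M N) (Pair x)) (H \<times> G)
        = emeasure (K x) (Pair x -` (H \<times> G) \<inter> space (K x))"
      using HG by (rule emeasure_distr)
    also have "Pair x -` (H \<times> G) \<inter> space (K x) = (if x \<in> H then G else {})"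
      using sets.sets_into_space[OF G] by (auto simp: subprob_measurableD[OF K x])
    finally show "emeasure (distr (K x) (M' \<Otimes>\<^sub>M N) (Pair x)) (H \<times> G) = indicator H x * emeasure (K x) G"
      by simp
  qed
  finally show ?thesis .
qed

lemma emeasure_Times_reg_cond_dist_YX:
  assumes P: "prob_space P" "sets P = sets (MX \<Otimes>\<^sub>M MY)"
    and K: "reg_cond_dist_YX P MX MY K" and H: "H \<in> sets MX" and G: "G \<in> sets MY"
  shows "emeasure P (H \<times> G) = (\<integral>\<^sup>+x. indicator H x * emeasure (K x) G \<partial>marg_X P MX)"
proof -
  interpret P: prob_space P by fact
  interpret PX: prob_space "marg_X P MX"
    using P by (rule prob_space_marg_X)
  have K_prob: "\<forall>x\<in>space MX. prob_space (K x) \<and> sets (K x) = sets MY"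
    using K unfolding reg_cond_dist_YX_def by blast
  have "(\<integral>\<^sup>+x. indicator H x * emeasure (K x) G \<partial>marg_X P MX)
      = (\<integral>\<^sup>+x. ennreal (indicator H x * measure (K x) G) \<partial>marg_X P MX)"
    using K_prob
    by (intro nn_integral_cong)
      (simp add: finite_measure.emeasure_eq_measure[OF prob_space.finite_measure] indicator_def)
  also have "\<dots> = ennreal (\<integral>x. indicator H x * measure (K x) G \<partial>marg_X P MX)"
  proof (rule nn_integral_eq_integral)
    have "(\<lambda>x. indicator H x * measure (K x) G) \<in> borel_measurable MX"
      using reg_cond_dist_YX_measurable[OF K] H G by measurable
    moreover have "measure (K x) G \<le> 1" if "x \<in> space MX" for x
      using K_prob that by (simp add: prob_space.prob_le_1)
    ultimately show "integrable (marg_X P MX) (\<lambda>x. indicator H x * measure (K x) G)"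
      by (intro PX.integrable_const_bound[where B=1]) (auto intro!: AE_I2 simp: indicator_def)
  qed auto
  also have "\<dots> = emeasure P (H \<times> G)"
    using K H G by (simp add: reg_cond_dist_YX_def P.emeasure_eq_measure)
  finally show ?thesis ..
qed

lemma reg_cond_dist_YX_eq_bind:
  assumes P: "prob_space P" "sets P = sets (MX \<Otimes>\<^sub>M MY)"
    and K: "reg_cond_dist_YX P MX MY K"
  shows "P = marg_X P MX \<bind> (\<lambda>x. distr (K x) (MX \<Otimes>\<^sub>M MY) (Pair x))"
    (is "P = ?B")
proof -
  interpret P: prob_space P by fact
  interpret PX: prob_space "marg_X P MX"
    using P by (rule prob_space_marg_X)
  have K_meas: "K \<in> measurable (marg_X P MX) (subprob_algebra MY)"
    using reg_cond_dist_YX_measurable[OF K] by simp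
  let ?E = "{H \<times> G |H G. H \<in> sets MX \<and> G \<in> sets MY}"
  show ?thesis
  proof (rule measure_eqI_generator_eq_countable[OF Int_stable_pair_measure_generator,
        where A = "{space MX \<times> space MY}"])
    show "?E \<subseteq> Pow (space MX \<times> space MY)"
      by (auto dest: sets.sets_into_space)
    show "sets P = sigma_sets (space MX \<times> space MY) ?E"
      using P(2) by (simp add: sets_pair_measure)
    have "sets ?B = sets (MX \<Otimes>\<^sub>M MY)"
      using PX.not_empty by (intro sets_bind) simp_all
    then show "sets ?B = sigma_sets (space MX \<times> space MY) ?E"
      by (simp only: sets_pair_measure)
  next
    fix X assume "X \<in> ?E"
    then obtain H G where "X = H \<times> G" "H \<in> sets MX" "G \<in> sets MY"
      by auto
    then show "emeasure P X = emeasure ?B X"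
      by (simp add: emeasure_Times_reg_cond_dist_YX[OF P K]
          emeasure_bind_distr_Pair_Times[OF K_meas PX.not_empty])
  qed auto
qed

lemma nn_integral_reg_cond_dist_YX:
  assumes P: "prob_space P" "sets P = sets (MX \<Otimes>\<^sub>M MY)"
    and K: "reg_cond_dist_YX P MX MY K"
    and f: "f \<in> borel_measurable (MX \<Otimes>\<^sub>M MY)"
  shows "(\<integral>\<^sup>+z. f z \<partial>P) = (\<integral>\<^sup>+x. \<integral>\<^sup>+y. f (x, y) \<partial>K x \<partial>marg_X P MX)"
proof -
  have K_meas: "K \<in> measurable MX (subprob_algebra MY)"
    using K by (rule reg_cond_dist_YX_measurable)
  have "(\<integral>\<^sup>+z. f z \<partial>P) = (\<integral>\<^sup>+z. f z \<partial>(marg_X P MX \<bind> (\<lambda>x. distr (K x) (MX \<Otimes>\<^sub>M MY) (Pair x))))"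
    using reg_cond_dist_YX_eq_bind[OF P K] by (rule arg_cong)
  also have "\<dots> = (\<integral>\<^sup>+x. \<integral>\<^sup>+z. f z \<partial>distr (K x) (MX \<Otimes>\<^sub>M MY) (Pair x) \<partial>marg_X P MX)"
    using f measurable_distr_Pair_kernel[OF K_meas] by (intro nn_integral_bind) simp_all
  also have "\<dots> = (\<integral>\<^sup>+x. \<integral>\<^sup>+y. f (x, y) \<partial>K x \<partial>marg_X P MX)"
  proof (rule nn_integral_cong)
    fix x assume "x \<in> space (marg_X P MX)"
    then have "Pair x \<in> measurable (K x) (MX \<Otimes>\<^sub>M MY)"
      using K_meas measurable_Pair1' by (simp add: subprob_measurableD(3))
    then show "(\<integral>\<^sup>+z. f z \<partial>distr (K x) (MX \<Otimes>\<^sub>M MY) (Pair x)) = (\<integral>\<^sup>+y. f (x, y) \<partial>K x)"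
      using f by (intro nn_integral_distr) simp_all
  qed
  finally show ?thesis .
qed

lemma reg_cond_dist_XY_swap:
  assumes P: "sets P = sets (MX \<Otimes>\<^sub>M MY)" and L: "reg_cond_dist_XY P MX MY L"
  shows "marg_X (distr P (MY \<Otimes>\<^sub>M MX) prod.swap) MY = marg_Y P MY"
    and "reg_cond_dist_YX (distr P (MY \<Otimes>\<^sub>M MX) prod.swap) MY MX L"
proof -
  let ?Q = "distr P (MY \<Otimes>\<^sub>M MX) prod.swap"
  have swap: "prod.swap \<in> measurable P (MY \<Otimes>\<^sub>M MX)"
    using measurable_prod_swap by (simp add: measurable_cong_sets[OF P refl])
  show marg: "marg_X ?Q MY = marg_Y P MY"
    unfolding marg_X_def marg_Y_def using swap by (simp add: distr_distr comp_def)
  have space_P: "space P = space MX \<times> space MY"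
    using sets_eq_imp_space_eq[OF P] by (simp add: space_pair_measure)
  show "reg_cond_dist_YX ?Q MY MX L"
    unfolding reg_cond_dist_YX_def
  proof (intro conjI ballI)
    fix G H assume G: "G \<in> sets MX" and H: "H \<in> sets MY"
    have "measure ?Q (H \<times> G) = measure P (prod.swap -` (H \<times> G) \<inter> space P)"
      using G H swap by (intro measure_distr) simp_all
    also have "prod.swap -` (H \<times> G) \<inter> space P = G \<times> H"
      using space_P sets.sets_into_space[OF G] sets.sets_into_space[OF H] by auto
    finally show "measure ?Q (H \<times> G) = (\<integral>y. indicator H y * measure (L y) G \<partial>marg_X ?Q MY)"
      using L G H unfolding marg reg_cond_dist_XY_def by auto
  qed (use L in \<open>auto simp: reg_cond_dist_XY_def\<close>)
qed

lemma nn_integral_reg_cond_dist_XY: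
  assumes P: "prob_space P" "sets P = sets (MX \<Otimes>\<^sub>M MY)"
    and L: "reg_cond_dist_XY P MX MY L"
    and f: "f \<in> borel_measurable (MX \<Otimes>\<^sub>M MY)"
  shows "(\<integral>\<^sup>+z. f z \<partial>P) = (\<integral>\<^sup>+y. \<integral>\<^sup>+x. f (x, y) \<partial>L y \<partial>marg_Y P MY)"
proof -
  let ?Q = "distr P (MY \<Otimes>\<^sub>M MX) prod.swap"
  have swap: "prod.swap \<in> measurable P (MY \<Otimes>\<^sub>M MX)"
    using measurable_prod_swap by (simp add: measurable_cong_sets[OF P(2) refl])
  have Q: "prob_space ?Q" "sets ?Q = sets (MY \<Otimes>\<^sub>M MX)"
    using prob_space.prob_space_distr[OF P(1) swap] by simp_all
  have f_swap: "(\<lambda>z. f (prod.swap z)) \<in> borel_measurable (MY \<Otimes>\<^sub>M MX)"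
    using measurable_prod_swap f by (rule measurable_compose)
  have "(\<integral>\<^sup>+z. f z \<partial>P) = (\<integral>\<^sup>+z. f (prod.swap z) \<partial>?Q)"
    using swap f_swap by (simp add: nn_integral_distr)
  also have "\<dots> = (\<integral>\<^sup>+y. \<integral>\<^sup>+x. f (x, y) \<partial>L y \<partial>marg_Y P MY)"
    using nn_integral_reg_cond_dist_YX[OF Q reg_cond_dist_XY_swap(2)[OF P(2) L] f_swap]
    by (simp add: reg_cond_dist_XY_swap(1)[OF P(2) L])
  finally show ?thesis .
qed

lemma iterated_nn_integral_reg_cond_dist_swap:
  assumes P: "prob_space P" "sets P = sets (MX \<Otimes>\<^sub>M MY)"
    and K: "reg_cond_dist_YX P MX MY K" and L: "reg_cond_dist_XY P MX MY L"
    and f: "case_prod f \<in> borel_measurable (MX \<Otimes>\<^sub>M MY)"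
  shows "(\<integral>\<^sup>+x. \<integral>\<^sup>+y. f x y \<partial>K x \<partial>marg_X P MX) = (\<integral>\<^sup>+y. \<integral>\<^sup>+x. f x y \<partial>L y \<partial>marg_Y P MY)"
  using nn_integral_reg_cond_dist_YX[OF P K f] nn_integral_reg_cond_dist_XY[OF P L f] by simp

locale em_iteration =
  fixes P :: "('a \<times> 'b) measure" and MX :: "'a measure" and MY :: "'b measure"
    and K :: "'a \<Rightarrow> 'b measure" and L :: "'b \<Rightarrow> 'a measure"
    and h :: "'a \<Rightarrow> real" and g0 :: "'b \<Rightarrow> real"
  assumes P: "prob_space P" "sets P = sets (MX \<Otimes>\<^sub>M MY)"
    and K: "reg_cond_dist_YX P MX MY K"
    and L: "reg_cond_dist_XY P MX MY L"
    and h: "h \<in> borel_measurable MX" "\<forall>x\<in>space MX. h x > 0"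
           "integrable (marg_X P MX) h" "(\<integral>x. h x \<partial>marg_X P MX) = 1"
    and g0: "g0 \<in> borel_measurable MY" "\<forall>y\<in>space MY. g0 y > 0"
           "integrable (marg_Y P MY) g0" "(\<integral>y. g0 y \<partial>marg_Y P MY) = 1"
    and fin_q: "\<forall>n. \<forall>x\<in>space MX. integrable (K x) (itg K L h g0 n)"
    and fin_g: "\<forall>n. \<forall>y\<in>space MY. integrable (L y) (\<lambda>x. itq K L h g0 n x y * h x)"
begin

abbreviation "PX \<equiv> marg_X P MX"
abbreviation "PY \<equiv> marg_Y P MY"
abbreviation "g \<equiv> itg K L h g0"

sublocale PX: prob_space PX
  using P by (rule prob_space_marg_X)

definition hn :: "nat \<Rightarrow> 'a \<Rightarrow> real" where
  "hn n x = (\<integral>y. g n y \<partial>K x)"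

definition rho :: "nat \<Rightarrow> 'b \<Rightarrow> real" where
  "rho n y = (\<integral>x. h x / hn n x \<partial>L y)"

lemmas h_measurable [measurable] = h(1)

lemma K_measurable [measurable]: "K \<in> measurable MX (subprob_algebra MY)"
  using K by (rule reg_cond_dist_YX_measurable)

lemma L_measurable [measurable]: "L \<in> measurable MY (subprob_algebra MX)"
  using reg_cond_dist_XY_swap(2)[OF P(2) L] by (rule reg_cond_dist_YX_measurable)

lemma prob_space_K: "x \<in> space MX \<Longrightarrow> prob_space (K x)"
  and prob_space_L: "y \<in> space MY \<Longrightarrow> prob_space (L y)"
  using K L unfolding reg_cond_dist_YX_def reg_cond_dist_XY_def by blast+

lemma space_K [simp]: "x \<in> space MX \<Longrightarrow> space (K x) = space MY"
  and space_L [simp]: "y \<in> space MY \<Longrightarrow> space (L y) = space MX"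
  and measurable_K [simp]: "x \<in> space MX \<Longrightarrow> measurable (K x) N = measurable MY N"
  by (simp_all add: subprob_measurableD[OF K_measurable] subprob_measurableD[OF L_measurable])

lemma h_pos: "x \<in> space MX \<Longrightarrow> 0 < h x"
  using h(2) by blast

lemma borel_measurable_nn_integral_K [measurable]:
  "f \<in> borel_measurable MY \<Longrightarrow> (\<lambda>x. \<integral>\<^sup>+y. f y \<partial>K x) \<in> borel_measurable MX"
  using K_measurable by (rule measurable_compose) (rule nn_integral_measurable_subprob_algebra)

lemma ith_itg_measurable [measurable]: "ith P MX (g n) \<in> borel_measurable MX"
  unfolding ith_def by simp

lemma borel_measurable_integral_K [measurable]:
  fixes f :: "'b \<Rightarrow> real"
  assumes "f \<in> borel_measurable MY"
  shows "(\<lambda>x. \<integral>y. f y \<partial>K x) \<in> borel_measurable MX"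
  using K_measurable integral_measurable_subprob_algebra[OF assms] by (rule measurable_compose)

lemma itq_eq: "itq K L h g0 n x y = g n y / hn n x"
  by (simp add: itq_def hn_def)

lemma integrable_K_itg: "x \<in> space MX \<Longrightarrow> integrable (K x) (g n)"
  using fin_q by blast

lemma integrable_L_h_div_hn:
  assumes "y \<in> space MY" "g n y \<noteq> 0"
  shows "integrable (L y) (\<lambda>x. h x / hn n x)"
proof -
  have "integrable (L y) (\<lambda>x. itq K L h g0 n x y * h x)"
    using fin_g assms(1) by blast
  then have "integrable (L y) (\<lambda>x. 1 / g n y * (itq K L h g0 n x y * h x))"
    by (rule integrable_mult_right)
  also have "(\<lambda>x. 1 / g n y * (itq K L h g0 n x y * h x)) = (\<lambda>x. h x / hn n x)"
    using assms(2) by (simp add: itq_eq fun_eq_iff)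
  finally show ?thesis .
qed

lemma itg_Suc_eq: "g (Suc n) y = g n y * rho n y"
proof -
  have "g (Suc n) y = (\<integral>x. g n y * (h x / hn n x) \<partial>L y)"
    by (simp add: hn_def)
  also have "\<dots> = g n y * rho n y"
    unfolding rho_def by (rule integral_mult_right_zero)
  finally show ?thesis .
qed

declare itg.simps(2) [simp del]

lemma itg_measurable [measurable]: "g n \<in> borel_measurable MY"
proof (induction n)
  case 0
  then show ?case
    using g0(1) by simp
next
  case (Suc n)
  then have "rho n \<in> borel_measurable MY"
    unfolding rho_def hn_def by measurable
  then show ?case
    using Suc unfolding itg_Suc_eq by measurable
qed

lemma hn_measurable [measurable]: "hn n \<in> borel_measurable MX"
  unfolding hn_def by measurable

lemma rho_measurable [measurable]: "rho n \<in> borel_measurable MY"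
  unfolding rho_def by measurable

lemma hn_pos_if_itg_pos:
  assumes "\<And>y. y \<in> space MY \<Longrightarrow> 0 < g n y" "x \<in> space MX"
  shows "0 < hn n x"
  unfolding hn_def using assms prob_space_K integrable_K_itg by (intro integral_pos_prob_space) auto

lemma itg_pos: "y \<in> space MY \<Longrightarrow> 0 < g n y"
proof (induction n arbitrary: y)
  case 0
  then show ?case
    using g0(2) by simp
next
  case (Suc n)
  have "integrable (L y) (\<lambda>x. h x / hn n x)"
    using Suc.IH[OF Suc.prems] by (intro integrable_L_h_div_hn[OF Suc.prems]) simp
  then have "0 < rho n y"
    unfolding rho_def using Suc prob_space_L h_pos hn_pos_if_itg_pos[OF Suc.IH]
    by (intro integral_pos_prob_space) auto
  then show ?case
    using Suc unfolding itg_Suc_eq by simp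
qed

lemma hn_pos: "x \<in> space MX \<Longrightarrow> 0 < hn n x"
  using hn_pos_if_itg_pos itg_pos by blast

lemma rho_pos: "y \<in> space MY \<Longrightarrow> 0 < rho n y"
  using itg_pos[of y n] itg_pos[of y "Suc n"] unfolding itg_Suc_eq by (simp add: zero_less_mult_iff)

lemma nn_integral_K_itg:
  assumes "x \<in> space MX" "0 \<le> a"
  shows "(\<integral>\<^sup>+y. ennreal (a * g n y) \<partial>K x) = ennreal (a * hn n x)"
proof -
  have "(\<integral>\<^sup>+y. ennreal (a * g n y) \<partial>K x) = ennreal (\<integral>y. a * g n y \<partial>K x)"
    using assms integrable_K_itg itg_pos
    by (intro nn_integral_eq_integral) (auto intro!: AE_I2 mult_nonneg_nonneg less_imp_le[OF itg_pos])
  then show ?thesis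
    by (simp add: hn_def)
qed

lemma nn_integral_L_h_div_hn:
  assumes "y \<in> space MY" "0 \<le> b"
  shows "(\<integral>\<^sup>+x. ennreal (h x / hn n x * b) \<partial>L y) = ennreal (b * rho n y)"
proof -
  have "integrable (L y) (\<lambda>x. h x / hn n x * b)"
    using assms(1) itg_pos[OF assms(1), of n] by (intro integrable_mult_left integrable_L_h_div_hn) auto
  then have "(\<integral>\<^sup>+x. ennreal (h x / hn n x * b) \<partial>L y) = ennreal (\<integral>x. h x / hn n x * b \<partial>L y)"
    using assms by (intro nn_integral_eq_integral)
      (auto intro!: AE_I2 divide_nonneg_pos mult_nonneg_nonneg less_imp_le[OF h_pos] hn_pos)
  also have "(\<integral>x. h x / hn n x * b \<partial>L y) = b * rho n y"
    unfolding rho_def by (subst integral_mult_left_zero) (rule mult.commute)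
  finally show ?thesis .
qed

lemma itq_prob_density:
  assumes x: "x \<in> space MX"
  shows "(\<forall>y\<in>space MY. itq K L h g0 n x y > 0) \<and> itq K L h g0 n x \<in> borel_measurable MY \<and>
    integrable (K x) (itq K L h g0 n x) \<and> (\<integral>y. itq K L h g0 n x y \<partial>K x) = 1"
proof -
  have q: "itq K L h g0 n x = (\<lambda>y. g n y / hn n x)"
    by (simp add: itq_eq fun_eq_iff)
  have "(\<integral>y. g n y / hn n x \<partial>K x) = hn n x / hn n x"
    by (simp add: hn_def)
  then show ?thesis
    unfolding q using x itg_pos hn_pos[OF x, of n] integrable_K_itg by simp
qed

lemma nn_integral_itg_Suc: "(\<integral>\<^sup>+y. ennreal (g (Suc n) y) \<partial>PY) = 1"
proof -
  have "(\<integral>\<^sup>+y. ennreal (g (Suc n) y) \<partial>PY) = (\<integral>\<^sup>+y. \<integral>\<^sup>+x. ennreal (h x / hn n x * g n y) \<partial>L y \<partial>PY)"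
    unfolding itg_Suc_eq using itg_pos
    by (intro nn_integral_cong nn_integral_L_h_div_hn[symmetric]) (auto intro: less_imp_le)
  also have "\<dots> = (\<integral>\<^sup>+x. \<integral>\<^sup>+y. ennreal (h x / hn n x * g n y) \<partial>K x \<partial>PX)"
    by (rule iterated_nn_integral_reg_cond_dist_swap[OF P K L, symmetric]) measurable
  also have "\<dots> = (\<integral>\<^sup>+x. ennreal (h x) \<partial>PX)"
  proof (rule nn_integral_cong)
    fix x assume "x \<in> space PX"
    then have x: "x \<in> space MX"
      by simp
    show "(\<integral>\<^sup>+y. ennreal (h x / hn n x * g n y) \<partial>K x) = ennreal (h x)"
      using hn_pos[OF x, of n] nn_integral_K_itg[OF x, of "h x / hn n x" n] h_pos[OF x] by simp
  qed
  also have "\<dots> = 1"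
    using h h_pos by (subst nn_integral_eq_integral) (auto intro!: AE_I2 less_imp_le)
  finally show ?thesis .
qed

lemma itg_prob_density:
  "(\<forall>y\<in>space MY. g n y > 0) \<and> g n \<in> borel_measurable MY \<and>
    integrable PY (g n) \<and> (\<integral>y. g n y \<partial>PY) = 1"
proof (cases n)
  case 0
  then show ?thesis
    using g0 by simp
next
  case (Suc m)
  have "integrable PY (g n) \<and> (\<integral>y. g n y \<partial>PY) = 1"
    using nn_integral_itg_Suc[of m] itg_pos itg_measurable unfolding Suc
    by (subst nn_integral_eq_integrable[symmetric]) (auto intro!: AE_I2 less_imp_le)
  then show ?thesis
    using itg_pos by simp
qed

lemma distr_itQ_fst: "distr (itQ P (g n)) MX fst = density PX (\<lambda>x. ennreal (hn n x))"
proof (rule measure_eqI)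
  fix A assume "A \<in> sets (distr (itQ P (g n)) MX fst)"
  then have A: "A \<in> sets MX"
    by simp
  have fst: "fst \<in> measurable P MX"
    by (simp add: measurable_cong_sets[OF P(2) refl])
  have integrand: "(\<lambda>z. ennreal (indicator A (fst z) * g n (snd z))) \<in> borel_measurable (MX \<Otimes>\<^sub>M MY)"
    using A by measurable
  have "emeasure (distr (itQ P (g n)) MX fst) A = emeasure (itQ P (g n)) (fst -` A \<inter> space P)"
    using fst A by (simp add: emeasure_distr itQ_def)
  also have "\<dots> = (\<integral>\<^sup>+z. ennreal (g n (snd z)) * indicator (fst -` A \<inter> space P) z \<partial>P)"
    unfolding itQ_def using measurable_sets[OF fst A]
    by (intro emeasure_density) (simp_all only: measurable_cong_sets[OF P(2) refl], measurable)
  also have "\<dots> = (\<integral>\<^sup>+z. ennreal (indicator A (fst z) * g n (snd z)) \<partial>P)"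
    by (intro nn_integral_cong) (auto simp: indicator_def)
  also have "\<dots> = (\<integral>\<^sup>+x. \<integral>\<^sup>+y. ennreal (indicator A x * g n y) \<partial>K x \<partial>PX)"
    using nn_integral_reg_cond_dist_YX[OF P K integrand] by simp
  also have "\<dots> = (\<integral>\<^sup>+x. ennreal (hn n x) * indicator A x \<partial>PX)"
    by (intro nn_integral_cong) (simp add: nn_integral_K_itg indicator_def)
  also have "\<dots> = emeasure (density PX (\<lambda>x. ennreal (hn n x))) A"
    using A by (intro emeasure_density[symmetric]) simp_all
  finally show "emeasure (distr (itQ P (g n)) MX fst) A = emeasure (density PX (\<lambda>x. ennreal (hn n x))) A" .
qed simp

lemma AE_ith_eq_hn: "AE x in PX. ith P MX (g n) x = hn n x"
proof -
  have "AE x in PX. ennreal (hn n x) = RN_deriv PX (distr (itQ P (g n)) MX fst) x"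
    using distr_itQ_fst[symmetric] by (intro PX.RN_deriv_unique) simp_all
  then show ?thesis
    using AE_space by eventually_elim (simp add: ith_def hn_pos less_imp_le)
qed

lemma integrable_h_mult:
  assumes "integrable PX (\<lambda>x. h x * \<bar>f x\<bar>)" "f \<in> borel_measurable MX"
  shows "integrable PX (\<lambda>x. h x * f x)"
proof (rule integrable_mult_if_integrable_mult_abs[OF assms(1)])
  show "(\<lambda>x. h x * f x) \<in> borel_measurable PX"
    using assms(2) by measurable
qed (simp add: h_pos less_imp_le)

lemma integrable_h_ln_hn:
  assumes "integrable PX (\<lambda>x. h x * \<bar>ln (ith P MX (g n) x)\<bar>)"
  shows "integrable PX (\<lambda>x. h x * ln (hn n x))"
proof (rule integrable_h_mult)
  have "AE x in PX. h x * \<bar>ln (ith P MX (g n) x)\<bar> = h x * \<bar>ln (hn n x)\<bar>"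
    using AE_ith_eq_hn[of n] by eventually_elim simp
  then show "integrable PX (\<lambda>x. h x * \<bar>ln (hn n x)\<bar>)"
    by (rule integrable_cong_AE_imp[OF assms, rotated]) measurable
qed measurable

lemma KL_dens_ith_eq:
  assumes "integrable PX (\<lambda>x. h x * \<bar>ln (h x)\<bar>)" "integrable PX (\<lambda>x. h x * \<bar>ln (ith P MX (g n) x)\<bar>)"
  shows "KL_dens PX h (ith P MX (g n)) = (\<integral>x. h x * ln (h x) \<partial>PX) - (\<integral>x. h x * ln (hn n x) \<partial>PX)"
proof -
  have "KL_dens PX h (ith P MX (g n)) = (\<integral>x. h x * ln (h x) - h x * ln (hn n x) \<partial>PX)"
    unfolding KL_dens_def
  proof (rule integral_cong_AE)
    show "AE x in PX. h x * ln (h x / ith P MX (g n) x) = h x * ln (h x) - h x * ln (hn n x)"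
      using AE_ith_eq_hn[of n] AE_space
    proof eventually_elim
      case (elim x)
      then show ?case
        using h_pos[of x] hn_pos[of x n] by (simp add: ln_div right_diff_distrib)
    qed
  qed measurable
  also have "\<dots> = (\<integral>x. h x * ln (h x) \<partial>PX) - (\<integral>x. h x * ln (hn n x) \<partial>PX)"
    using integrable_h_mult[OF assms(1)] integrable_h_ln_hn[OF assms(2)]
    by (rule Bochner_Integration.integral_diff) measurable
  finally show ?thesis .
qed

lemma nn_integral_itg_div_rho:
  "(\<integral>\<^sup>+x. ennreal (h x / hn n x) * (\<integral>\<^sup>+y. ennreal (g n y / rho n y) \<partial>K x) \<partial>PX) = 1"
proof -
  have "(\<integral>\<^sup>+x. ennreal (h x / hn n x) * (\<integral>\<^sup>+y. ennreal (g n y / rho n y) \<partial>K x) \<partial>PX)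
      = (\<integral>\<^sup>+x. \<integral>\<^sup>+y. ennreal (h x / hn n x * (g n y / rho n y)) \<partial>K x \<partial>PX)"
  proof (rule nn_integral_cong)
    fix x assume "x \<in> space PX"
    then have x: "x \<in> space MX"
      by simp
    have "(\<lambda>y. ennreal (g n y / rho n y)) \<in> borel_measurable (K x)"
      using x by (subst measurable_K) measurable
    then have "ennreal (h x / hn n x) * (\<integral>\<^sup>+y. ennreal (g n y / rho n y) \<partial>K x)
        = (\<integral>\<^sup>+y. ennreal (h x / hn n x) * ennreal (g n y / rho n y) \<partial>K x)"
      by (rule nn_integral_cmult[symmetric])
    also have "\<dots> = (\<integral>\<^sup>+y. ennreal (h x / hn n x * (g n y / rho n y)) \<partial>K x)"
      using x h_pos hn_pos by (intro nn_integral_cong ennreal_mult'[symmetric]) (auto intro: less_imp_le)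
    finally show "ennreal (h x / hn n x) * (\<integral>\<^sup>+y. ennreal (g n y / rho n y) \<partial>K x)
        = (\<integral>\<^sup>+y. ennreal (h x / hn n x * (g n y / rho n y)) \<partial>K x)" .
  qed
  also have "\<dots> = (\<integral>\<^sup>+y. \<integral>\<^sup>+x. ennreal (h x / hn n x * (g n y / rho n y)) \<partial>L y \<partial>PY)"
    by (rule iterated_nn_integral_reg_cond_dist_swap[OF P K L]) measurable
  also have "\<dots> = (\<integral>\<^sup>+y. ennreal (g n y) \<partial>PY)"
  proof (rule nn_integral_cong)
    fix y assume "y \<in> space PY"
    then have y: "y \<in> space MY"
      by simp
    have "0 \<le> g n y / rho n y"
      using itg_pos[OF y, of n] rho_pos[OF y, of n] by simp
    with y have "(\<integral>\<^sup>+x. ennreal (h x / hn n x * (g n y / rho n y)) \<partial>L y) = ennreal (g n y / rho n y * rho n y)"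
      by (rule nn_integral_L_h_div_hn)
    then show "(\<integral>\<^sup>+x. ennreal (h x / hn n x * (g n y / rho n y)) \<partial>L y) = ennreal (g n y)"
      using rho_pos[OF y, of n] by simp
  qed
  also have "\<dots> = 1"
    using itg_prob_density[of n] itg_pos by (subst nn_integral_eq_integral) (auto intro!: AE_I2 less_imp_le)
  finally show ?thesis .
qed

lemma AE_integrable_itg_div_rho: "AE x in PX. integrable (K x) (\<lambda>y. g n y / rho n y)"
proof -
  have "AE x in PX. ennreal (h x / hn n x) * (\<integral>\<^sup>+y. ennreal (g n y / rho n y) \<partial>K x) \<noteq> \<infinity>"
    using nn_integral_itg_div_rho[of n] by (intro nn_integral_PInf_AE) (simp_all add: borel_measurable_nn_integral_K)
  then show ?thesis
    using AE_space
  proof eventually_elim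
    case (elim x)
    then have x: "x \<in> space MX"
      by simp
    have "ennreal (h x / hn n x) \<noteq> 0"
      using h_pos[OF x] hn_pos[OF x, of n] by simp
    with elim have "(\<integral>\<^sup>+y. ennreal (g n y / rho n y) \<partial>K x) < \<infinity>"
      by (simp add: ennreal_mult_eq_top_iff less_top)
    then show ?case
      using x itg_pos rho_pos by (intro integrableI_nonneg) (auto intro!: AE_I2 less_imp_le)
  qed
qed

lemma has_bochner_integral_h_div_hn_mult_itg_div_rho:
  "has_bochner_integral PX (\<lambda>x. h x / hn n x * (\<integral>y. g n y / rho n y \<partial>K x)) 1"
proof (rule has_bochner_integral_nn_integral)
  have AE: "AE x in PX. 0 \<le> h x / hn n x \<and> 0 \<le> (\<integral>y. g n y / rho n y \<partial>K x) \<and>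
      ennreal (h x / hn n x * (\<integral>y. g n y / rho n y \<partial>K x))
        = ennreal (h x / hn n x) * (\<integral>\<^sup>+y. ennreal (g n y / rho n y) \<partial>K x)"
    using AE_integrable_itg_div_rho[of n] AE_space
  proof eventually_elim
    case (elim x)
    then have x: "x \<in> space MX"
      by simp
    have nonneg: "0 \<le> g n y / rho n y" if "y \<in> space MY" for y
      using itg_pos[OF that, of n] rho_pos[OF that, of n] by simp
    have h_div_hn: "0 \<le> h x / hn n x"
      using h_pos[OF x] hn_pos[OF x, of n] by simp
    have "(\<integral>\<^sup>+y. ennreal (g n y / rho n y) \<partial>K x) = ennreal (\<integral>y. g n y / rho n y \<partial>K x)"
      using elim x nonneg by (intro nn_integral_eq_integral) (auto intro!: AE_I2)
    moreover have "0 \<le> (\<integral>y. g n y / rho n y \<partial>K x)"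
      using x nonneg by (intro Bochner_Integration.integral_nonneg) simp
    moreover have "ennreal (h x / hn n x * (\<integral>y. g n y / rho n y \<partial>K x))
        = ennreal (h x / hn n x) * ennreal (\<integral>y. g n y / rho n y \<partial>K x)"
      using h_div_hn by (rule ennreal_mult')
    ultimately show ?case
      using h_div_hn by presburger
  qed
  then show "AE x in PX. 0 \<le> h x / hn n x * (\<integral>y. g n y / rho n y \<partial>K x)"
    by eventually_elim (blast intro: mult_nonneg_nonneg)
  from AE have "AE x in PX. ennreal (h x / hn n x * (\<integral>y. g n y / rho n y \<partial>K x))
      = ennreal (h x / hn n x) * (\<integral>\<^sup>+y. ennreal (g n y / rho n y) \<partial>K x)"
    by eventually_elim (elim conjE)
  then have "(\<integral>\<^sup>+x. ennreal (h x / hn n x * (\<integral>y. g n y / rho n y \<partial>K x)) \<partial>PX)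
      = (\<integral>\<^sup>+x. ennreal (h x / hn n x) * (\<integral>\<^sup>+y. ennreal (g n y / rho n y) \<partial>K x) \<partial>PX)"
    by (rule nn_integral_cong_AE)
  also have "\<dots> = ennreal 1"
    using nn_integral_itg_div_rho[of n] by simp
  finally show "(\<integral>\<^sup>+x. ennreal (h x / hn n x * (\<integral>y. g n y / rho n y \<partial>K x)) \<partial>PX) = ennreal 1" .
qed measurable

lemma hn_ln_ratio_lower_bound:
  assumes x: "x \<in> space MX" and int: "integrable (K x) (\<lambda>y. g n y / rho n y)"
  shows "hn n x - (\<integral>y. g n y / rho n y \<partial>K x) \<le> hn n x * ln (hn (Suc n) x / hn n x)"
proof -
  define a where "a = hn (Suc n) x / hn n x"
  have a: "0 < a"
    using x hn_pos by (simp add: a_def)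
  have "(\<integral>y. 2 * g n y - g n y / rho n y - g (Suc n) y / a \<partial>K x) \<le> (\<integral>y. ln a * g n y \<partial>K x)"
  proof (rule integral_mono)
    fix y assume "y \<in> space (K x)"
    then have y: "y \<in> space MY"
      using x by simp
    have "g n y * (2 - 1 / rho n y - rho n y / a) \<le> g n y * ln a"
      using ln_ge_two_minus_inverse_minus_divide[OF a rho_pos[OF y, of n]] itg_pos[OF y, of n]
      by (intro mult_left_mono) auto
    then show "2 * g n y - g n y / rho n y - g (Suc n) y / a \<le> ln a * g n y"
      by (simp add: itg_Suc_eq algebra_simps)
  qed (use int integrable_K_itg[OF x] in auto)
  moreover have "(\<integral>y. 2 * g n y - g n y / rho n y - g (Suc n) y / a \<partial>K x)
      = (\<integral>y. 2 * g n y \<partial>K x) - (\<integral>y. g n y / rho n y \<partial>K x) - (\<integral>y. g (Suc n) y / a \<partial>K x)"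
    using int integrable_K_itg[OF x] by simp
  moreover have "(\<integral>y. 2 * g n y \<partial>K x) = 2 * hn n x" "(\<integral>y. g (Suc n) y / a \<partial>K x) = hn (Suc n) x / a"
    unfolding hn_def by (rule integral_mult_right_zero integral_divide_zero)+
  moreover have "hn (Suc n) x / a = hn n x"
    using hn_pos[OF x, of n] hn_pos[OF x, of "Suc n"] by (simp add: a_def)
  moreover have "(\<integral>y. ln a * g n y \<partial>K x) = ln a * hn n x"
    unfolding hn_def by (rule integral_mult_right_zero)
  ultimately have "hn n x - (\<integral>y. g n y / rho n y \<partial>K x) \<le> ln a * hn n x"
    by linarith
  then show ?thesis
    by (simp add: a_def mult.commute)
qed

lemma integral_h_ln_hn_mono:
  assumes "integrable PX (\<lambda>x. h x * ln (hn n x))" "integrable PX (\<lambda>x. h x * ln (hn (Suc n) x))"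
  shows "(\<integral>x. h x * ln (hn n x) \<partial>PX) \<le> (\<integral>x. h x * ln (hn (Suc n) x) \<partial>PX)"
proof -
  let ?s = "\<lambda>x. h x / hn n x * (\<integral>y. g n y / rho n y \<partial>K x)"
  have s: "integrable PX ?s" "integral\<^sup>L PX ?s = 1"
    using has_bochner_integral_h_div_hn_mult_itg_div_rho[of n] by (auto simp: has_bochner_integral_iff)
  have "0 = (\<integral>x. h x - ?s x \<partial>PX)"
    using h(3,4) s by simp
  also have "\<dots> \<le> (\<integral>x. h x * ln (hn (Suc n) x) - h x * ln (hn n x) \<partial>PX)"
  proof (rule integral_mono_AE)
    show "AE x in PX. h x - ?s x \<le> h x * ln (hn (Suc n) x) - h x * ln (hn n x)"
      using AE_integrable_itg_div_rho[of n] AE_space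
    proof eventually_elim
      case (elim x)
      then have "h x / hn n x * (hn n x - (\<integral>y. g n y / rho n y \<partial>K x))
          \<le> h x / hn n x * (hn n x * ln (hn (Suc n) x / hn n x))"
        using h_pos hn_pos by (intro mult_left_mono hn_ln_ratio_lower_bound) (auto intro: less_imp_le)
      then show ?case
        using elim h_pos[of x] hn_pos[of x n] hn_pos[of x "Suc n"]
        by (simp add: ln_div field_simps)
    qed
  qed (use h(3) s assms in auto)
  also have "\<dots> = (\<integral>x. h x * ln (hn (Suc n) x) \<partial>PX) - (\<integral>x. h x * ln (hn n x) \<partial>PX)"
    by (rule Bochner_Integration.integral_diff[OF assms(2,1)])
  finally show ?thesis
    by simp
qed

lemma KL_dens_ith_Suc_le:
  assumes "integrable PX (\<lambda>x. h x * \<bar>ln (h x)\<bar>)"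
    and "\<forall>n. integrable PX (\<lambda>x. h x * \<bar>ln (ith P MX (g n) x)\<bar>)"
  shows "KL_dens PX h (ith P MX (g (Suc n))) \<le> KL_dens PX h (ith P MX (g n))"
proof -
  have integrable_ith: "integrable PX (\<lambda>x. h x * \<bar>ln (ith P MX (g k) x)\<bar>)" for k
    using assms(2) by blast
  have "(\<integral>x. h x * ln (hn n x) \<partial>PX) \<le> (\<integral>x. h x * ln (hn (Suc n) x) \<partial>PX)"
    by (intro integral_h_ln_hn_mono integrable_h_ln_hn integrable_ith)
  then show ?thesis
    unfolding KL_dens_ith_eq[OF assms(1) integrable_ith] by linarith
qed

end

theorem theorem3:
  fixes P :: "('a \<times> 'b) measure" and MX :: "'a measure" and MY :: "'b measure"
    and K :: "'a \<Rightarrow> 'b measure" and L :: "'b \<Rightarrow> 'a measure"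
    and h :: "'a \<Rightarrow> real" and g0 :: "'b \<Rightarrow> real"
  assumes P: "prob_space P" "sets P = sets (MX \<Otimes>\<^sub>M MY)"
    and K: "reg_cond_dist_YX P MX MY K"
    and L: "reg_cond_dist_XY P MX MY L"
    and h: "h \<in> borel_measurable MX" "\<forall>x\<in>space MX. h x > 0"
           "integrable (marg_X P MX) h" "(\<integral>x. h x \<partial>marg_X P MX) = 1"
    and g0: "g0 \<in> borel_measurable MY" "\<forall>y\<in>space MY. g0 y > 0"
           "integrable (marg_Y P MY) g0" "(\<integral>y. g0 y \<partial>marg_Y P MY) = 1"
    and fin_q: "\<forall>n. \<forall>x\<in>space MX. integrable (K x) (itg K L h g0 n)"
    and fin_g: "\<forall>n. \<forall>y\<in>space MY. integrable (L y) (\<lambda>x. itq K L h g0 n x y * h x)"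
  shows "(\<forall>n. \<forall>x\<in>space MX.
            (\<forall>y\<in>space MY. itq K L h g0 n x y > 0) \<and>
            itq K L h g0 n x \<in> borel_measurable MY \<and>
            integrable (K x) (itq K L h g0 n x) \<and>
            (\<integral>y. itq K L h g0 n x y \<partial>K x) = 1) \<and>
         (\<forall>n\<ge>1.
            (\<forall>y\<in>space MY. itg K L h g0 n y > 0) \<and>
            itg K L h g0 n \<in> borel_measurable MY \<and>
            integrable (marg_Y P MY) (itg K L h g0 n) \<and>
            (\<integral>y. itg K L h g0 n y \<partial>marg_Y P MY) = 1) \<and>
         ((integrable (marg_X P MX) (\<lambda>x. h x * \<bar>ln (h x)\<bar>) \<and>
           (\<forall>n. integrable (marg_X P MX) (\<lambda>x. h x * \<bar>ln (ith P MX (itg K L h g0 n) x)\<bar>)))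
          \<longrightarrow> (\<forall>n. KL_dens (marg_X P MX) h (ith P MX (itg K L h g0 (Suc n)))
                    \<le> KL_dens (marg_X P MX) h (ith P MX (itg K L h g0 n))))"
proof -
  have em: "em_iteration P MX MY K L h g0"
    using assms by (simp add: em_iteration_def)
  show ?thesis
    by (rule conjI[OF _ conjI]; intro allI ballI impI em_iteration.itq_prob_density[OF em]
        em_iteration.itg_prob_density[OF em] em_iteration.KL_dens_ith_Suc_le[OF em]) auto
qed

end
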